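(* Let $\mathcal C$ be a $C^2$ convex curve with total curvature satisfying $\int_{\mathcal C}\kappa\,ds\le\pi$ that intersects a circle of radius $R$ in three or more points. Then there is a point on $\mathcal C$ with curvature $\kappa=1/R$.
   Context: Curves are of class $C^2$ with nonvanishing first and second derivative vectors, oriented so that the curvature $\kappa$ is positive (convex curves). $s$ denotes arclength and $\int_{\mathcal C}\kappa\,ds$ is the total curvature, i.e. the total change of the angle of the tangent vector along $\mathcal C$. *)

theory Defs
  imports "HOL-Analysis.Analysis"
begin

text \<open>Plane curves are maps real => complex on a parameter interval [a,b].
  Given first and second derivative vectors g1 = g', g2 = g'', the signed curvature is
  (x'y'' - y'x'') / |g'|^3.\<close>

definition curvature :: "(real \<Rightarrow> complex) \<Rightarrow> (real \<Rightarrow> complex) \<Rightarrow> real \<Rightarrow> real" where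
  "curvature g1 g2 t =
     (Re (g1 t) * Im (g2 t) - Im (g1 t) * Re (g2 t)) / (norm (g1 t)) ^ 3"

definition convex_C2_curve ::
  "(real \<Rightarrow> complex) \<Rightarrow> (real \<Rightarrow> complex) \<Rightarrow> (real \<Rightarrow> complex) \<Rightarrow> real \<Rightarrow> real \<Rightarrow> bool" where
  "convex_C2_curve g g1 g2 a b \<longleftrightarrow>
     a < b \<and>
     (\<forall>t\<in>{a..b}. (g has_vector_derivative g1 t) (at t within {a..b})) \<and>
     (\<forall>t\<in>{a..b}. (g1 has_vector_derivative g2 t) (at t within {a..b})) \<and>
     continuous_on {a..b} g2 \<and>
     (\<forall>t\<in>{a..b}. g1 t \<noteq> 0 \<and> g2 t \<noteq> 0) \<and>
     (\<forall>t\<in>{a..b}. curvature g1 g2 t > 0)"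

definition total_curvature ::
  "(real \<Rightarrow> complex) \<Rightarrow> (real \<Rightarrow> complex) \<Rightarrow> real \<Rightarrow> real \<Rightarrow> real" where
  "total_curvature g1 g2 a b = integral {a..b} (\<lambda>t. curvature g1 g2 t * norm (g1 t))"

end

theory Submission
  imports Defs
begin

(* If the curvature never equals 1/R, then by continuity R * kappa < 1 everywhere or
   R * kappa > 1 everywhere. Parametrise the curve by its tangent angle, which increases by at
   most pi. The centre of the circle of radius R touching the curve at a point moves with
   velocity |g'| (1 - R kappa) times the unit tangent, so its projections onto fixed directions
   are monotone along every arc; comparing them at the ends of an arc bounds the chord of the
   arc from below if R * kappa < 1 and from above if R * kappa > 1, in terms of the turning of
   the arc and the angles the chord makes with the tangents. The two chords joining three
   points of the curve on the circle are also chords of the circle, with lengths fixed by their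
   inscribed angles, and elementary trigonometry shows that this is incompatible with either
   set of bounds. *)

section \<open>Trigonometric inequalities\<close>

lemma sin_pos_shift_into_0_pi:
  fixes x :: real
  assumes "sin x > 0"
  obtains n :: int where "0 < x - 2*pi*n" "x - 2*pi*n < pi"
proof
  define n where "n = \<lfloor>x / (2*pi)\<rfloor>"
  have "n \<le> x/(2*pi)" "x/(2*pi) < n + 1"
    unfolding n_def by linarith+
  then have "2*pi*n \<le> x" "x < 2*pi*n + 2*pi"
    by (auto simp: field_simps)
  moreover have "sin (x - 2*pi*n) = sin x"
    using cos_int_2pin[of n] sin_int_2pin[of n] by (simp add: sin_diff mult.assoc)
  ultimately show "0 < x - 2*pi*n" "x - 2*pi*n < pi"
    using assms sin_le_zero[of "x - 2*pi*n"] by (fastforce simp: le_less)+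
qed

lemma sin_pos_imp_pos:
  fixes x :: real
  assumes "- pi \<le> x" "x < pi" "0 < sin x"
  shows "0 < x"
proof (rule ccontr)
  assume "\<not> 0 < x"
  then have "0 \<le> sin (- x)" using assms(1) by (intro sin_ge_zero) auto
  then show False using assms(3) by simp
qed

lemma shift_angle_pair_into_0_pi:
  fixes b1 b2 e :: real
  assumes "sin (b1 + e) > 0" "sin (b2 - e) > 0" "0 < b1 + b2" "b1 + b2 < pi"
  obtains x y where "0 < x" "0 < y" "x + y = b1 + b2"
    "sin x = sin (b1 + e)" "sin y = sin (b2 - e)"
proof -
  obtain n :: int where n: "0 < b1 + e - 2*pi*n" "b1 + e - 2*pi*n < pi"
    using sin_pos_shift_into_0_pi[OF assms(1)] by blast
  define y where "y = b2 - e + 2*pi*n"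
  have "sin y = sin (b2 - e)"
    using cos_int_2pin[of n] sin_int_2pin[of n] by (simp add: y_def sin_add mult.assoc)
  moreover have "0 < y"
  proof (rule ccontr)
    assume "\<not> 0 < y"
    moreover have "- pi < y" using n assms(3) unfolding y_def by linarith
    moreover have "y < pi" using n assms(4) unfolding y_def by linarith
    ultimately have "sin y \<le> 0" using sin_ge_zero[of "- y"] by simp
    then show False using \<open>sin y = sin (b2 - e)\<close> assms(2) by simp
  qed
  moreover have "sin (b1 + e - 2*pi*n) = sin (b1 + e)"
    using cos_int_2pin[of n] sin_int_2pin[of n] by (simp add: sin_diff mult.assoc)
  ultimately show ?thesis
    using that[of "b1 + e - 2*pi*n" y] n unfolding y_def by simp
qed

lemma two_sin_mult_sin_le_one_minus_cos:
  fixes x b d :: real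
  assumes "0 < b" "b < d" "d \<le> pi" "0 \<le> x" "x \<le> b"
  shows "2 * sin x * sin (d - b) \<le> 1 - cos d"
proof -
  have sdb: "0 \<le> sin (d - b)" using assms by (intro sin_ge_zero) auto
  show ?thesis
  proof (cases "b \<le> pi/2")
    case True
    have "sin x \<le> sin b" using assms True by (intro sin_monotone_2pi_le) auto
    then have "2 * sin x * sin (d - b) \<le> 2 * sin b * sin (d - b)"
      using sdb by (simp add: mult_right_mono)
    also have "\<dots> = cos (2*b - d) - cos d"
    proof -
      have "sin b * sin (d - b) = (cos (2*b - d) - cos d) / 2"
        by (simp add: sin_times_sin algebra_simps)
      then show ?thesis by simp
    qed
    also have "\<dots> \<le> 1 - cos d" by simp
    finally show ?thesis .
  next
    case False
    have "sin (d - b) \<le> sin (d - pi/2)" using assms False by (intro sin_monotone_2pi_le) auto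
    also have "\<dots> = - cos d" by (simp add: sin_diff)
    finally have "sin (d - b) \<le> - cos d" .
    moreover have "sin x * sin (d - b) \<le> sin (d - b)"
      using sdb sin_le_one[of x] mult_right_mono[of "sin x" 1 "sin (d - b)"] by simp
    ultimately show ?thesis using cos_ge_minus_one[of d] by linarith
  qed
qed

(* In the application d1, d2 are the turning angles of two consecutive arcs, b1, b2 the angles
   at their common endpoint between the tangent and the two chords, and 2 sin (b1 + e),
   2 sin (b2 - e) the lengths of these chords when they are inscribed in a unit circle. *)
lemma flat_chords_trig:
  fixes b1 b2 d1 d2 e :: real
  assumes "0 < b1" "b1 < d1" "0 < b2" "b2 < d2" "d1 + d2 \<le> pi"
    and "sin (b1 + e) > 0" "sin (b2 - e) > 0"
  shows "2 * sin (b1 + e) * sin (d1 - b1) \<le> 1 - cos d1 \<or> 2 * sin (b2 - e) * sin (d2 - b2) \<le> 1 - cos d2"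
proof -
  obtain x y where xy: "0 < x" "0 < y" "x + y = b1 + b2" "sin x = sin (b1 + e)" "sin y = sin (b2 - e)"
  proof (rule shift_angle_pair_into_0_pi[OF assms(6,7)])
    show "0 < b1 + b2" "b1 + b2 < pi" using assms(1-5) by linarith+
  qed
  show ?thesis
  proof (cases "x \<le> b1")
    case True
    then show ?thesis using two_sin_mult_sin_le_one_minus_cos[of b1 d1 x] assms xy by simp
  next
    case False
    then show ?thesis using two_sin_mult_sin_le_one_minus_cos[of b2 d2 y] assms xy by simp
  qed
qed

lemma sin_le_at_end_or_start:
  fixes x b d :: real
  assumes "0 < b" "b < d" "b \<le> x" "x < b + pi - d"
  shows "b \<le> pi/2 \<and> sin b \<le> sin x \<or> d - b \<le> pi/2 \<and> sin (d - b) \<le> sin x"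
proof (cases "x \<le> pi/2")
  case True
  then have "sin b \<le> sin x" using assms by (intro sin_monotone_2pi_le) auto
  then show ?thesis using assms True by simp
next
  case False
  then have "sin (d - b) \<le> sin (pi - x)" using assms by (intro sin_monotone_2pi_le) auto
  then show ?thesis using assms False by simp
qed

lemma steep_chords_trig:
  fixes b1 b2 d1 d2 e :: real
  assumes "0 < b1" "b1 < d1" "0 < b2" "b2 < d2" "d1 + d2 \<le> pi"
    and "sin (b1 + e) > 0" "sin (b2 - e) > 0"
  obtains "b1 \<le> pi/2" "sin b1 \<le> sin (b1 + e)"
    | "d1 - b1 \<le> pi/2" "sin (d1 - b1) \<le> sin (b1 + e)"
    | "b2 \<le> pi/2" "sin b2 \<le> sin (b2 - e)"
    | "d2 - b2 \<le> pi/2" "sin (d2 - b2) \<le> sin (b2 - e)"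
proof -
  obtain x y where xy: "0 < x" "0 < y" "x + y = b1 + b2" "sin x = sin (b1 + e)" "sin y = sin (b2 - e)"
  proof (rule shift_angle_pair_into_0_pi[OF assms(6,7)])
    show "0 < b1 + b2" "b1 + b2 < pi" using assms(1-5) by linarith+
  qed
  show ?thesis
  proof (cases "b1 \<le> x")
    case True
    have "x < b1 + pi - d1" using xy assms by linarith
    then show ?thesis
      using sin_le_at_end_or_start[of b1 d1 x] True that(1,2) assms(1,2) xy(4) by auto
  next
    case False
    have "b2 \<le> y" "y < b2 + pi - d2" using xy assms False by linarith+
    then show ?thesis
      using sin_le_at_end_or_start[of b2 d2 y] that(3,4) assms(3,4) xy(5) by auto
  qed
qed

section \<open>Elementary analysis in the plane\<close>

lemma chord_of_circle:
  fixes p c :: complex and L R \<alpha> \<theta> :: real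
  assumes "c - p = R * cis \<theta>" "cmod (p + L * cis \<alpha> - c) = R" "L > 0"
  shows "L = 2 * R * cos (\<alpha> - \<theta>)"
proof -
  have "p + L * cis \<alpha> - c = L * cis \<alpha> - R * cis \<theta>" using assms(1) by (simp add: algebra_simps)
  with assms(2) have "(cmod (L * cis \<alpha> - R * cis \<theta>))\<^sup>2 = R\<^sup>2" by (simp only:)
  then have "(L * cos \<alpha> - R * cos \<theta>)\<^sup>2 + (L * sin \<alpha> - R * sin \<theta>)\<^sup>2 = R\<^sup>2"
    by (simp add: cmod_power2)
  moreover have "(L * cos \<alpha> - R * cos \<theta>)\<^sup>2 + (L * sin \<alpha> - R * sin \<theta>)\<^sup>2
      = L\<^sup>2 * ((sin \<alpha>)\<^sup>2 + (cos \<alpha>)\<^sup>2) + R\<^sup>2 * ((sin \<theta>)\<^sup>2 + (cos \<theta>)\<^sup>2)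
        - 2 * L * R * (cos \<alpha> * cos \<theta> + sin \<alpha> * sin \<theta>)"
    by algebra
  ultimately have "L\<^sup>2 = 2 * L * R * cos (\<alpha> - \<theta>)" by (simp add: cos_diff)
  then have "L * L = L * (2 * R * cos (\<alpha> - \<theta>))" by (simp add: power2_eq_square mult_ac)
  then show ?thesis using assms(3) by simp
qed

lemma Im_mult_cis_of_diff:
  fixes L \<alpha> \<psi> :: real
  assumes "w - z = L * cis \<alpha>"
  shows "Im (w * cis \<psi>) = Im (z * cis \<psi>) + L * sin (\<alpha> + \<psi>)"
proof -
  have "w = z + L * cis \<alpha>" using assms by (simp add: algebra_simps)
  then show ?thesis by (simp add: distrib_right mult.assoc cis_mult)
qed

lemma continuous_on_Icc_avoiding_value:
  fixes f :: "real \<Rightarrow> real"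
  assumes "continuous_on {a..b} f" "\<And>t. t \<in> {a..b} \<Longrightarrow> f t \<noteq> y"
  shows "(\<forall>t\<in>{a..b}. f t < y) \<or> (\<forall>t\<in>{a..b}. y < f t)"
proof (rule ccontr)
  assume "\<not> ?thesis"
  then obtain s t where st: "s \<in> {a..b}" "t \<in> {a..b}" "f s \<le> y" "y \<le> f t"
    by force
  have "connected (f ` {a..b})"
    using assms(1) by (rule connected_continuous_image) simp
  then have "y \<in> f ` {a..b}"
    using st unfolding connected_iff_interval by blast
  then show False using assms(2) by blast
qed

lemma has_real_derivative_within_Icc_restrict:
  fixes f f' :: "real \<Rightarrow> real"
  assumes deriv: "\<And>t. t \<in> {a..b} \<Longrightarrow> (f has_real_derivative f' t) (at t within {a..b})"
    and "a \<le> x" "y \<le> b"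
  shows "\<And>t. x < t \<Longrightarrow> t < y \<Longrightarrow> (f has_real_derivative f' t) (at t)"
    and "continuous_on {x..y} f"
proof -
  fix t assume "x < t" "t < y"
  then show "(f has_real_derivative f' t) (at t)"
    using deriv[of t] assms(2,3) at_within_Icc_at[of a t b] by auto
next
  show "continuous_on {x..y} f"
    using DERIV_continuous_on[OF deriv] by (rule continuous_on_subset) (use assms in auto)
qed

lemma nonvanishing_polar_form:
  fixes f f' :: "real \<Rightarrow> complex"
  assumes deriv: "\<And>t. t \<in> {a..b} \<Longrightarrow> (f has_vector_derivative f' t) (at t within {a..b})"
    and cont: "continuous_on {a..b} f'" and nz: "\<And>t. t \<in> {a..b} \<Longrightarrow> f t \<noteq> 0" and "a \<le> b"
  obtains \<theta> where "\<And>t. t \<in> {a..b} \<Longrightarrow> f t = cmod (f t) * cis (\<theta> t)"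
    "\<And>t. t \<in> {a..b} \<Longrightarrow> (\<theta> has_real_derivative Im (f' t / f t)) (at t within {a..b})"
proof -
  define \<Lambda> where "\<Lambda> t = integral {a..t} (\<lambda>s. f' s / f s)" for t
  have "continuous_on {a..b} f" using deriv by (rule continuous_on_vector_derivative)
  then have d\<Lambda>: "(\<Lambda> has_vector_derivative f' t / f t) (at t within {a..b})" if "t \<in> {a..b}" for t
    unfolding \<Lambda>_def using that nz cont
    by (intro integral_has_vector_derivative continuous_intros) auto
  have "((\<lambda>t. f t * exp (- \<Lambda> t)) has_vector_derivative 0) (at t within {a..b})"
    if t: "t \<in> {a..b}" for t
  proof -
    have "((\<lambda>t. exp (- \<Lambda> t)) has_vector_derivative - (f' t / f t) * exp (- \<Lambda> t))
        (at t within {a..b})"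
      using field_vector_diff_chain_within[OF has_vector_derivative_minus[OF d\<Lambda>[OF t]], of exp]
      by (simp add: o_def has_field_derivative_at_within[OF DERIV_exp])
    from has_vector_derivative_mult[OF deriv[OF t] this]
    show ?thesis using nz[OF t] by (simp add: field_simps)
  qed
  then obtain C where C: "\<And>t. t \<in> {a..b} \<Longrightarrow> f t * exp (- \<Lambda> t) = C"
    using has_vector_derivative_zero_constant[of "{a..b}" "\<lambda>t. f t * exp (- \<Lambda> t)"] by auto
  have f_exp: "f t = f a * exp (\<Lambda> t)" if "t \<in> {a..b}" for t
  proof -
    have "f t * exp (- \<Lambda> t) = f a"
      using C[of t] C[of a] that \<open>a \<le> b\<close> by (simp add: \<Lambda>_def)
    then show ?thesis by (metis exp_minus_inverse mult.assoc mult.right_neutral)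
  qed
  define \<theta> where "\<theta> t = Arg (f a) + Im (\<Lambda> t)" for t
  show ?thesis
  proof
    fix t assume t: "t \<in> {a..b}"
    have "f t = (cmod (f a) * cis (Arg (f a))) * (exp (Re (\<Lambda> t)) * cis (Im (\<Lambda> t)))"
      by (metis f_exp[OF t] exp_eq_polar rcis_cmod_Arg rcis_def)
    then show "f t = cmod (f t) * cis (\<theta> t)"
      unfolding \<theta>_def by (simp add: f_exp[OF t] norm_mult cis_mult[symmetric] mult_ac)
    show "(\<theta> has_real_derivative Im (f' t / f t)) (at t within {a..b})"
      unfolding \<theta>_def using DERIV_add[OF DERIV_const has_field_derivative_Im[OF d\<Lambda>[OF t]]] by simp
  qed
qed

section \<open>Curves parametrised by their tangent angle\<close>

locale turning_curve =
  fixes G :: "real \<Rightarrow> complex" and ph sp k :: "real \<Rightarrow> real" and a b :: real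
  assumes G_deriv: "t \<in> {a..b} \<Longrightarrow> (G has_vector_derivative sp t * cis (ph t)) (at t within {a..b})"
    and ph_deriv: "t \<in> {a..b} \<Longrightarrow> (ph has_real_derivative k t * sp t) (at t within {a..b})"
    and sp_pos: "t \<in> {a..b} \<Longrightarrow> 0 < sp t"
    and k_pos: "t \<in> {a..b} \<Longrightarrow> 0 < k t"
begin

lemma ph_less:
  assumes "a \<le> x" "x < y" "y \<le> b"
  shows "ph x < ph y"
proof (rule DERIV_pos_imp_increasing_open[OF \<open>x < y\<close>])
  fix t assume "x < t" "t < y"
  then show "\<exists>d. (ph has_real_derivative d) (at t) \<and> 0 < d"
    using has_real_derivative_within_Icc_restrict(1)[OF ph_deriv, of x y t] assms sp_pos[of t] k_pos[of t]
    by auto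
qed (rule has_real_derivative_within_Icc_restrict(2)[OF ph_deriv], use assms in auto)

(* G t + r i e^(i ph t) is the centre of the circle of radius r touching the curve at G t on its
   concave side; normal_height is its coordinate orthogonal to the direction \<psi>. *)
definition normal_height :: "real \<Rightarrow> real \<Rightarrow> real \<Rightarrow> real" where
  "normal_height \<psi> r t = Im ((G t + r * \<i> * cis (ph t)) * cis (- \<psi>))"

lemma normal_height_eq: "normal_height \<psi> r t = Im (G t * cis (- \<psi>)) + r * cos (ph t - \<psi>)"
  by (simp add: normal_height_def distrib_right mult.assoc cis_mult)

lemma normal_height_deriv:
  assumes "t \<in> {a..b}"
  shows "(normal_height \<psi> r has_real_derivative sp t * (1 - r * k t) * sin (ph t - \<psi>))
    (at t within {a..b})"
proof -
  have "((\<lambda>t. Im (G t * cis (- \<psi>))) has_real_derivative Im (sp t * cis (ph t) * cis (- \<psi>)))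
      (at t within {a..b})"
    by (intro has_field_derivative_Im has_vector_derivative_mult_left G_deriv assms)
  moreover have "((\<lambda>t. r * cos (ph t - \<psi>)) has_real_derivative r * (- sin (ph t - \<psi>) * (k t * sp t)))
      (at t within {a..b})"
    by (auto intro!: derivative_eq_intros ph_deriv assms)
  ultimately show ?thesis
    unfolding normal_height_eq[abs_def]
    by (rule DERIV_add[THEN DERIV_cong]) (simp add: cis_mult algebra_simps sin_diff)
qed

lemma normal_height_strict_decreasing:
  assumes "a \<le> x" "x < y" "y \<le> b"
    and neg: "\<And>t. x < t \<Longrightarrow> t < y \<Longrightarrow> sp t * (1 - r * k t) * sin (ph t - \<psi>) < 0"
  shows "normal_height \<psi> r y < normal_height \<psi> r x"
proof (rule DERIV_neg_imp_decreasing_open[OF \<open>x < y\<close>])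
  fix t assume "x < t" "t < y"
  then show "\<exists>d. (normal_height \<psi> r has_real_derivative d) (at t) \<and> d < 0"
    using has_real_derivative_within_Icc_restrict(1)[OF normal_height_deriv, of x y t] assms neg by blast
qed (rule has_real_derivative_within_Icc_restrict(2)[OF normal_height_deriv], use assms in auto)

lemma normal_height_decreasing:
  assumes "a \<le> x" "x \<le> y" "y \<le> b"
    and nonpos: "\<And>t. x < t \<Longrightarrow> t < y \<Longrightarrow> sp t * (1 - r * k t) * sin (ph t - \<psi>) \<le> 0"
  shows "normal_height \<psi> r y \<le> normal_height \<psi> r x"
proof (rule DERIV_nonpos_imp_decreasing_open[OF \<open>x \<le> y\<close>])
  fix t assume "x < t" "t < y"
  then show "\<exists>d. (normal_height \<psi> r has_real_derivative d) (at t) \<and> d \<le> 0"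
    using has_real_derivative_within_Icc_restrict(1)[OF normal_height_deriv, of x y t] assms nonpos by blast
qed (rule has_real_derivative_within_Icc_restrict(2)[OF normal_height_deriv], use assms in auto)

end

(* Traversing the curve backwards and reflecting it keeps the curvature positive; this turns
   bounds at the end of a chord into bounds at its start. *)
lemma turning_curve_reflect:
  assumes "turning_curve G ph sp k a b"
  shows "turning_curve (\<lambda>t. cnj (G (- t))) (\<lambda>t. pi - ph (- t)) (\<lambda>t. sp (- t)) (\<lambda>t. k (- t)) (- b) (- a)"
proof
  interpret turning_curve G ph sp k a b by fact
  fix t assume t: "t \<in> {- b..- a}"
  have im: "uminus ` {- b..- a} = {a..b :: real}" by auto
  have neg: "(uminus has_real_derivative - 1) (at t within {- b..- a})"
    by (auto intro!: derivative_eq_intros)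
  have "(G has_vector_derivative sp (- t) * cis (ph (- t))) (at (- t) within uminus ` {- b..- a})"
    unfolding im using G_deriv t by auto
  from vector_diff_chain_within[OF neg[unfolded has_real_derivative_iff_has_vector_derivative] this]
  have "((\<lambda>t. cnj (G (- t))) has_vector_derivative - cnj (sp (- t) * cis (ph (- t))))
      (at t within {- b..- a})"
    using has_vector_derivative_cnj by (fastforce simp: o_def)
  moreover have "- cnj (sp (- t) * cis (ph (- t))) = sp (- t) * cis (pi - ph (- t))"
  proof -
    have "- cis (- ph (- t)) = cis (pi - ph (- t))" using minus_cis[of "- ph (- t)"] by (simp add: add.commute)
    then show ?thesis by (metis mult_minus_right cis_cnj complex_cnj_mult complex_cnj_complex_of_real)
  qed
  ultimately show "((\<lambda>t. cnj (G (- t))) has_vector_derivative sp (- t) * cis (pi - ph (- t)))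
      (at t within {- b..- a})"
    by simp
  have "((ph \<circ> uminus) has_real_derivative k (- t) * sp (- t) * - 1) (at t within {- b..- a})"
    using DERIV_image_chain[OF _ neg] ph_deriv[of "- t"] t unfolding im by auto
  then show "((\<lambda>t. pi - ph (- t)) has_real_derivative k (- t) * sp (- t)) (at t within {- b..- a})"
    by (auto intro!: derivative_eq_intros simp: o_def)
  show "0 < sp (- t)" "0 < k (- t)" using t sp_pos k_pos by auto
qed

context turning_curve
begin

lemma chord_lower_bound_at_end:
  fixes L :: real
  assumes "a \<le> ta" "ta < tb" "tb \<le> b" "ph tb - ph ta < pi"
    and chord: "G tb - G ta = L * cis (ph tb - \<beta>)"
    and flat: "\<And>t. t \<in> {ta<..<tb} \<Longrightarrow> r * k t < 1"
  shows "r * (1 - cos (ph tb - ph ta)) < L * sin \<beta>"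
proof -
  have "normal_height (ph tb) r tb < normal_height (ph tb) r ta"
  proof (rule normal_height_strict_decreasing[OF assms(1-3)])
    fix t assume t: "ta < t" "t < tb"
    have "0 < sin (ph tb - ph t)"
      using ph_less[of ta t] ph_less[of t tb] t assms by (intro sin_gt_zero) auto
    moreover have "0 < sp t * (1 - r * k t)" using sp_pos[of t] flat[of t] t assms by simp
    ultimately show "sp t * (1 - r * k t) * sin (ph t - ph tb) < 0"
      by (metis minus_diff_eq sin_minus mult_pos_pos neg_less_0_iff_less mult_minus_right)
  qed
  moreover have "cos (ph ta - ph tb) = cos (ph tb - ph ta)" by (metis cos_minus minus_diff_eq)
  ultimately show ?thesis
    using Im_mult_cis_of_diff[OF chord, of "- ph tb"] by (simp add: normal_height_eq algebra_simps)
qed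

lemma reflected_chord:
  fixes L :: real
  assumes "G tb - G ta = L * cis (ph tb - \<beta>)"
  shows "cnj (G ta) - cnj (G tb) = L * cis (pi - ph ta - (ph tb - ph ta - \<beta>))"
proof -
  have "cnj (G ta) - cnj (G tb) = - cnj (L * cis (ph tb - \<beta>))"
    by (metis assms complex_cnj_diff minus_diff_eq)
  also have "\<dots> = L * cis (pi - ph ta - (ph tb - ph ta - \<beta>))"
    using minus_cis[of "\<beta> - ph tb"]
    by (simp add: cis_cnj add.commute) (metis mult_minus_right)
  finally show ?thesis .
qed

lemma chord_lower_bound_at_start:
  fixes L :: real
  assumes "a \<le> ta" "ta < tb" "tb \<le> b" "ph tb - ph ta < pi"
    and chord: "G tb - G ta = L * cis (ph tb - \<beta>)"
    and flat: "\<And>t. t \<in> {ta<..<tb} \<Longrightarrow> r * k t < 1"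
  shows "r * (1 - cos (ph tb - ph ta)) < L * sin (ph tb - ph ta - \<beta>)"
proof -
  interpret reflected: turning_curve "\<lambda>t. cnj (G (- t))" "\<lambda>t. pi - ph (- t)" "\<lambda>t. sp (- t)" "\<lambda>t. k (- t)" "- b" "- a"
    by (rule turning_curve_reflect) unfold_locales
  show ?thesis
    using reflected.chord_lower_bound_at_end[where ta="- tb" and tb="- ta" and \<beta>="ph tb - ph ta - \<beta>"]
      assms reflected_chord[OF chord] by auto
qed

lemma chord_direction:
  assumes "a \<le> ta" "ta < tb" "tb \<le> b" "ph tb - ph ta < pi" "G ta \<noteq> G tb"
  obtains L \<beta> :: real where "0 < L" "0 < \<beta>" "\<beta> < ph tb - ph ta" "G tb - G ta = L * cis (ph tb - \<beta>)"
proof -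
  define Z where "Z = (G tb - G ta) * cis (- ph tb)"
  define L where "L = cmod Z"
  define \<beta> where "\<beta> = - Arg Z"
  have "0 < L" using assms(5) by (simp add: L_def Z_def norm_mult)
  have "G tb - G ta = Z * cis (ph tb)" by (simp add: Z_def mult.assoc cis_mult)
  also have "Z = L * cis (- \<beta>)" using rcis_cmod_Arg[of Z] by (simp add: rcis_def L_def \<beta>_def)
  finally have chord: "G tb - G ta = L * cis (ph tb - \<beta>)" by (simp add: mult.assoc cis_mult)
  have "- pi \<le> \<beta>" "\<beta> < pi" using Arg_bounded[of Z] by (auto simp: \<beta>_def)
  moreover have "0 < sin \<beta>"
    using chord_lower_bound_at_end[OF assms(1-4) chord, of 0] \<open>0 < L\<close> by (simp add: zero_less_mult_iff)
  ultimately have "0 < \<beta>" by (rule sin_pos_imp_pos)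
  have "0 < sin (ph tb - ph ta - \<beta>)"
    using chord_lower_bound_at_start[OF assms(1-4) chord, of 0] \<open>0 < L\<close> by (simp add: zero_less_mult_iff)
  moreover have "- pi \<le> ph tb - ph ta - \<beta>" "ph tb - ph ta - \<beta> < pi"
    using \<open>\<beta> < pi\<close> \<open>0 < \<beta>\<close> assms(4) ph_less[OF assms(1-3)] by linarith+
  ultimately have "0 < ph tb - ph ta - \<beta>" using sin_pos_imp_pos by blast
  then show ?thesis using that[OF \<open>0 < L\<close> \<open>0 < \<beta>\<close> _ chord] by simp
qed

lemma reach_tangent_direction:
  assumes "a \<le> ta" "ta < tb" "tb \<le> b" "ph tb - ph ta < pi" "\<psi> < ph tb"
  obtains ts where "ta \<le> ts" "ts < tb" "\<psi> \<le> ph ts" "normal_height \<psi> 0 ts \<le> normal_height \<psi> 0 ta"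
proof (cases "ph ta \<le> \<psi>")
  case True
  have "continuous_on {ta..tb} ph"
    using has_real_derivative_within_Icc_restrict(2)[OF ph_deriv] assms by auto
  then obtain ts where ts: "ta \<le> ts" "ts \<le> tb" "ph ts = \<psi>"
    using IVT'[of ph ta \<psi> tb] True assms by auto
  then have "ts < tb" using assms(5) by (cases "ts = tb") auto
  have "normal_height \<psi> 0 ts \<le> normal_height \<psi> 0 ta"
  proof (rule normal_height_decreasing)
    fix t assume t: "ta < t" "t < ts"
    have "ph ta < ph t" "ph t < ph ts" using ph_less[of ta t] ph_less[of t ts] t ts assms by auto
    then have "0 < sin (\<psi> - ph t)" using ts assms by (intro sin_gt_zero) auto
    then have "sin (ph t - \<psi>) < 0" by (metis minus_diff_eq sin_minus neg_less_0_iff_less)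
    then show "sp t * (1 - 0 * k t) * sin (ph t - \<psi>) \<le> 0"
      using sp_pos[of t] t ts assms by (simp add: mult_pos_neg less_imp_le)
  qed (use ts assms in auto)
  then show ?thesis using that ts \<open>ts < tb\<close> by simp
next
  case False
  then show ?thesis using that[of ta] assms by simp
qed

lemma chord_upper_bound_at_end:
  fixes L :: real
  assumes "a \<le> ta" "ta < tb" "tb \<le> b" "ph tb - ph ta < pi"
    and chord: "G tb - G ta = L * cis (ph tb - \<beta>)"
    and steep: "\<And>t. t \<in> {ta<..<tb} \<Longrightarrow> 1 < r * k t" and "0 < r"
    and "0 < \<beta>" "\<beta> \<le> pi/2"
  shows "L < 2 * r * sin \<beta>"
proof -
  \<comment> \<open>The circle of radius r touching the curve at G tb meets the line of the chord again at
    angle \<beta>, cutting off a chord of length 2 r sin \<beta>; \<psi> is its tangent direction there.\<close>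
  define \<psi> where "\<psi> = ph tb - 2 * \<beta>"
  obtain ts where ts: "ta \<le> ts" "ts < tb" "\<psi> \<le> ph ts" "normal_height \<psi> 0 ts \<le> normal_height \<psi> 0 ta"
    using reach_tangent_direction[OF assms(1-4), of \<psi>] \<open>0 < \<beta>\<close> by (auto simp: \<psi>_def)
  have "normal_height \<psi> r tb < normal_height \<psi> r ts"
  proof (rule normal_height_strict_decreasing)
    fix t assume t: "ts < t" "t < tb"
    have "ph ts < ph t" "ph t < ph tb" using ph_less[of ts t] ph_less[of t tb] t ts assms by auto
    then have "0 < sin (ph t - \<psi>)" using ts assms by (intro sin_gt_zero) (auto simp: \<psi>_def)
    moreover have "sp t * (1 - r * k t) < 0"
      using sp_pos[of t] steep[of t] t ts assms by (simp add: mult_pos_neg)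
    ultimately show "sp t * (1 - r * k t) * sin (ph t - \<psi>) < 0" by (simp add: mult_neg_pos)
  qed (use ts assms in auto)
  also have "\<dots> \<le> normal_height \<psi> 0 ts + r"
    using \<open>0 < r\<close> cos_le_one[of "ph ts - \<psi>"] by (simp add: normal_height_eq)
  also have "\<dots> \<le> normal_height \<psi> 0 ta + r" using ts by simp
  finally have "L * sin \<beta> + r * cos (2 * \<beta>) < r"
    using Im_mult_cis_of_diff[OF chord, of "- \<psi>"] by (simp add: normal_height_eq \<psi>_def)
  then have "L * sin \<beta> < r * (2 * (sin \<beta>)\<^sup>2)"
    unfolding cos_double_sin by (simp add: algebra_simps)
  then have "L * sin \<beta> < (2 * r * sin \<beta>) * sin \<beta>"
    by (simp add: power2_eq_square mult_ac)
  moreover have "0 < sin \<beta>" using assms by (intro sin_gt_zero) auto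
  ultimately show ?thesis by simp
qed

lemma chord_upper_bound_at_start:
  fixes L :: real
  assumes "a \<le> ta" "ta < tb" "tb \<le> b" "ph tb - ph ta < pi"
    and chord: "G tb - G ta = L * cis (ph tb - \<beta>)"
    and steep: "\<And>t. t \<in> {ta<..<tb} \<Longrightarrow> 1 < r * k t" and "0 < r"
    and "\<beta> < ph tb - ph ta" "ph tb - ph ta - \<beta> \<le> pi/2"
  shows "L < 2 * r * sin (ph tb - ph ta - \<beta>)"
proof -
  interpret reflected: turning_curve "\<lambda>t. cnj (G (- t))" "\<lambda>t. pi - ph (- t)" "\<lambda>t. sp (- t)" "\<lambda>t. k (- t)" "- b" "- a"
    by (rule turning_curve_reflect) unfold_locales
  show ?thesis
    using reflected.chord_upper_bound_at_end[where ta="- tb" and tb="- ta" and \<beta>="ph tb - ph ta - \<beta>"]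
      assms reflected_chord[OF chord] by auto
qed

lemma concyclic_chords:
  fixes R :: real
  assumes "a \<le> t1" "t1 < t2" "t2 < t3" "t3 \<le> b" "ph t3 - ph t1 \<le> pi"
    and "G t1 \<in> sphere c R" "G t2 \<in> sphere c R" "G t3 \<in> sphere c R" "G t1 \<noteq> G t2" "G t2 \<noteq> G t3"
  obtains L1 L2 \<beta>1 \<beta>2 e :: real where
    "0 < L1" "0 < \<beta>1" "\<beta>1 < ph t2 - ph t1" "G t2 - G t1 = L1 * cis (ph t2 - \<beta>1)"
    "0 < L2" "0 < \<beta>2" "\<beta>2 < ph t3 - ph t2" "G t3 - G t2 = L2 * cis (ph t3 - \<beta>2)"
    "L1 = 2 * R * sin (\<beta>1 + e)" "L2 = 2 * R * sin (ph t3 - ph t2 - \<beta>2 - e)"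
proof -
  have "ph t1 < ph t2" "ph t2 < ph t3" using ph_less assms(1-4) by auto
  then have "ph t2 - ph t1 < pi" "ph t3 - ph t2 < pi" using assms(5) by linarith+
  obtain L1 \<beta>1 :: real where
    c1: "0 < L1" "0 < \<beta>1" "\<beta>1 < ph t2 - ph t1" "G t2 - G t1 = L1 * cis (ph t2 - \<beta>1)"
    using chord_direction[of t1 t2] \<open>ph t2 - ph t1 < pi\<close> assms(1-4,9) by auto
  obtain L2 \<beta>2 :: real where
    c2: "0 < L2" "0 < \<beta>2" "\<beta>2 < ph t3 - ph t2" "G t3 - G t2 = L2 * cis (ph t3 - \<beta>2)"
    using chord_direction[of t2 t3] \<open>ph t3 - ph t2 < pi\<close> assms(1-4,10) by auto
  define \<theta> where "\<theta> = Arg (c - G t2)"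
  have centre: "c - G t2 = R * cis \<theta>"
    using rcis_cmod_Arg[of "c - G t2"] assms(7) by (simp add: \<theta>_def rcis_def dist_norm)
  have "G t1 = G t2 + L1 * cis (ph t2 - \<beta>1 + pi)"
    using c1(4) unfolding minus_cis[symmetric] by (simp add: algebra_simps)
  moreover have "cmod (G t1 - c) = R" using assms(6) by (simp add: dist_norm norm_minus_commute)
  ultimately have L1: "L1 = 2 * R * cos (ph t2 - \<beta>1 + pi - \<theta>)"
    using chord_of_circle[OF centre _ c1(1)] by simp
  have "G t3 = G t2 + L2 * cis (ph t3 - \<beta>2)"
    using c2(4) by (simp add: algebra_simps)
  moreover have "cmod (G t3 - c) = R" using assms(8) by (simp add: dist_norm norm_minus_commute)
  ultimately have L2: "L2 = 2 * R * cos (ph t3 - \<beta>2 - \<theta>)"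
    using chord_of_circle[OF centre _ c2(1)] by simp
  \<comment> \<open>the angle between the inner normal at G t2 and the direction of the centre c\<close>
  define e where "e = \<theta> - ph t2 - pi/2"
  have "cos (ph t2 - \<beta>1 + pi - \<theta>) = sin (\<beta>1 + e)"
    unfolding cos_sin_eq e_def by (rule arg_cong[where f = sin]) simp
  moreover have "cos (ph t3 - \<beta>2 - \<theta>) = sin (ph t3 - ph t2 - \<beta>2 - e)"
  proof -
    have "cos (ph t3 - \<beta>2 - \<theta>) = cos (pi/2 - (ph t3 - ph t2 - \<beta>2 - e))"
      by (metis cos_minus minus_diff_eq diff_diff_eq2 add_diff_cancel_left' e_def)
    then show ?thesis by (simp add: sin_cos_eq)
  qed
  ultimately have "L1 = 2 * R * sin (\<beta>1 + e)" "L2 = 2 * R * sin (ph t3 - ph t2 - \<beta>2 - e)"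
    using L1 L2 by simp_all
  then show ?thesis using that c1 c2 by blast
qed

lemma concyclic_triple_not_flat:
  assumes "a \<le> t1" "t1 < t2" "t2 < t3" "t3 \<le> b" "ph t3 - ph t1 \<le> pi" "0 < R"
    and "G t1 \<in> sphere c R" "G t2 \<in> sphere c R" "G t3 \<in> sphere c R" "G t1 \<noteq> G t2" "G t2 \<noteq> G t3"
    and flat: "\<And>t. t \<in> {t1<..<t3} \<Longrightarrow> R * k t < 1"
  shows False
proof -
  obtain L1 L2 \<beta>1 \<beta>2 e :: real where
    c1: "0 < L1" "0 < \<beta>1" "\<beta>1 < ph t2 - ph t1" "G t2 - G t1 = L1 * cis (ph t2 - \<beta>1)" and
    c2: "0 < L2" "0 < \<beta>2" "\<beta>2 < ph t3 - ph t2" "G t3 - G t2 = L2 * cis (ph t3 - \<beta>2)" and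
    L: "L1 = 2 * R * sin (\<beta>1 + e)" "L2 = 2 * R * sin (ph t3 - ph t2 - \<beta>2 - e)"
    by (rule concyclic_chords[OF assms(1-5,7-11)])
  define d1 d2 where "d1 = ph t2 - ph t1" and "d2 = ph t3 - ph t2"
  have "d1 + d2 \<le> pi" using assms(5) by (simp add: d1_def d2_def)
  have flat1: "R * k t < 1" if "t \<in> {t1<..<t2}" for t using flat that assms(3) by simp
  have flat2: "R * k t < 1" if "t \<in> {t2<..<t3}" for t using flat that assms(2) by simp
  have "d1 < pi" "d2 < pi" using c1(2,3) c2(2,3) \<open>d1 + d2 \<le> pi\<close> by (simp_all add: d1_def d2_def)
  have lower1: "R * (1 - cos d1) < L1 * sin (d1 - \<beta>1)"
    using chord_lower_bound_at_start[OF _ _ _ _ c1(4) flat1] assms(1-4) \<open>d1 < pi\<close> by (simp add: d1_def)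
  have lower2: "R * (1 - cos d2) < L2 * sin \<beta>2"
    using chord_lower_bound_at_end[OF _ _ _ _ c2(4) flat2] assms(1-4) \<open>d2 < pi\<close> by (simp add: d2_def)
  have "0 < sin (\<beta>1 + e)" "0 < sin (d2 - \<beta>2 - e)"
    using L c1(1) c2(1) \<open>0 < R\<close> by (auto simp: d2_def zero_less_mult_iff)
  then have "2 * sin (\<beta>1 + e) * sin (d1 - \<beta>1) \<le> 1 - cos d1
      \<or> 2 * sin (d2 - \<beta>2 - e) * sin (d2 - (d2 - \<beta>2)) \<le> 1 - cos d2"
    using c1(2,3) c2(2,3) \<open>d1 + d2 \<le> pi\<close>
    by (intro flat_chords_trig) (auto simp: d1_def d2_def)
  then show False
  proof
    assume "2 * sin (\<beta>1 + e) * sin (d1 - \<beta>1) \<le> 1 - cos d1"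
    from mult_left_mono[OF this, of R] have "L1 * sin (d1 - \<beta>1) \<le> R * (1 - cos d1)"
      using \<open>0 < R\<close> by (simp add: L mult.assoc)
    with lower1 show False by simp
  next
    assume "2 * sin (d2 - \<beta>2 - e) * sin (d2 - (d2 - \<beta>2)) \<le> 1 - cos d2"
    from mult_left_mono[OF this, of R] have "L2 * sin \<beta>2 \<le> R * (1 - cos d2)"
      using \<open>0 < R\<close> by (simp add: L d2_def mult.assoc)
    with lower2 show False by simp
  qed
qed

lemma concyclic_triple_not_steep:
  assumes "a \<le> t1" "t1 < t2" "t2 < t3" "t3 \<le> b" "ph t3 - ph t1 \<le> pi" "0 < R"
    and "G t1 \<in> sphere c R" "G t2 \<in> sphere c R" "G t3 \<in> sphere c R" "G t1 \<noteq> G t2" "G t2 \<noteq> G t3"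
    and steep: "\<And>t. t \<in> {t1<..<t3} \<Longrightarrow> 1 < R * k t"
  shows False
proof -
  obtain L1 L2 \<beta>1 \<beta>2 e :: real where
    c1: "0 < L1" "0 < \<beta>1" "\<beta>1 < ph t2 - ph t1" "G t2 - G t1 = L1 * cis (ph t2 - \<beta>1)" and
    c2: "0 < L2" "0 < \<beta>2" "\<beta>2 < ph t3 - ph t2" "G t3 - G t2 = L2 * cis (ph t3 - \<beta>2)" and
    L: "L1 = 2 * R * sin (\<beta>1 + e)" "L2 = 2 * R * sin (ph t3 - ph t2 - \<beta>2 - e)"
    by (rule concyclic_chords[OF assms(1-5,7-11)])
  define d1 d2 where "d1 = ph t2 - ph t1" and "d2 = ph t3 - ph t2"
  have "d1 + d2 \<le> pi" using assms(5) by (simp add: d1_def d2_def)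
  have "d1 < pi" "d2 < pi" using c1(2,3) c2(2,3) \<open>d1 + d2 \<le> pi\<close> by (simp_all add: d1_def d2_def)
  have steep1: "1 < R * k t" if "t \<in> {t1<..<t2}" for t using steep that assms(3) by simp
  have steep2: "1 < R * k t" if "t \<in> {t2<..<t3}" for t using steep that assms(2) by simp
  note upper1 = chord_upper_bound_at_end[OF _ _ _ _ c1(4) steep1 \<open>0 < R\<close>]
    chord_upper_bound_at_start[OF _ _ _ _ c1(4) steep1 \<open>0 < R\<close>]
  note upper2 = chord_upper_bound_at_end[OF _ _ _ _ c2(4) steep2 \<open>0 < R\<close>]
    chord_upper_bound_at_start[OF _ _ _ _ c2(4) steep2 \<open>0 < R\<close>]
  have sin_pos: "0 < sin (\<beta>1 + e)" "0 < sin (d2 - \<beta>2 - e)"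
    using L c1(1) c2(1) \<open>0 < R\<close> by (auto simp: d2_def zero_less_mult_iff)
  consider "\<beta>1 \<le> pi/2" "sin \<beta>1 \<le> sin (\<beta>1 + e)"
    | "d1 - \<beta>1 \<le> pi/2" "sin (d1 - \<beta>1) \<le> sin (\<beta>1 + e)"
    | "d2 - \<beta>2 \<le> pi/2" "sin (d2 - \<beta>2) \<le> sin (d2 - \<beta>2 - e)"
    | "d2 - (d2 - \<beta>2) \<le> pi/2" "sin (d2 - (d2 - \<beta>2)) \<le> sin (d2 - \<beta>2 - e)"
    by (rule steep_chords_trig[of \<beta>1 d1 "d2 - \<beta>2" d2 e])
      (use sin_pos c1(2,3) c2(2,3) \<open>d1 + d2 \<le> pi\<close> in \<open>auto simp: d1_def d2_def\<close>)
  then show False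
  proof cases
    case 1
    then show False using upper1(1) assms(1-4) \<open>d1 < pi\<close> c1(2) \<open>0 < R\<close> by (simp add: L d1_def)
  next
    case 2
    then show False using upper1(2) assms(1-4) \<open>d1 < pi\<close> c1(3) \<open>0 < R\<close> by (simp add: L d1_def)
  next
    case 3
    then show False using upper2(2) assms(1-4) \<open>d2 < pi\<close> c2(3) \<open>0 < R\<close> by (simp add: L d2_def)
  next
    case 4
    then show False using upper2(1) assms(1-4) \<open>d2 < pi\<close> c2(2) \<open>0 < R\<close> by (simp add: L d2_def)
  qed
qed

lemma curvature_eq_inverse_radius_if_concyclic:
  assumes "continuous_on {a..b} k" "ph b - ph a \<le> pi" "0 < R"
    and "a \<le> t1" "t1 < t2" "t2 < t3" "t3 \<le> b"
    and "G t1 \<in> sphere c R" "G t2 \<in> sphere c R" "G t3 \<in> sphere c R" "G t1 \<noteq> G t2" "G t2 \<noteq> G t3"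
  shows "\<exists>t\<in>{a..b}. k t = 1 / R"
proof (rule ccontr)
  assume "\<not> ?thesis"
  then have "\<And>t. t \<in> {a..b} \<Longrightarrow> R * k t \<noteq> 1" using \<open>0 < R\<close> by (auto simp: field_simps)
  moreover have "continuous_on {a..b} (\<lambda>t. R * k t)" using assms(1) by (intro continuous_intros)
  ultimately have sign: "(\<forall>t\<in>{a..b}. R * k t < 1) \<or> (\<forall>t\<in>{a..b}. 1 < R * k t)"
    by (rule continuous_on_Icc_avoiding_value[rotated])
  have "ph a \<le> ph t1" using ph_less[of a t1] assms(4-7) by (cases "a = t1") auto
  moreover have "ph t3 \<le> ph b" using ph_less[of t3 b] assms(4-7) by (cases "t3 = b") auto
  ultimately have turn: "ph t3 - ph t1 \<le> pi" using assms(2) by linarith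
  have sub: "{t1<..<t3} \<subseteq> {a..b}" using assms(4-7) by auto
  from sign show False
  proof
    assume "\<forall>t\<in>{a..b}. R * k t < 1"
    then show False
      using concyclic_triple_not_flat[OF assms(4-7) turn \<open>0 < R\<close> assms(8-12)] sub by blast
  next
    assume "\<forall>t\<in>{a..b}. 1 < R * k t"
    then show False
      using concyclic_triple_not_steep[OF assms(4-7) turn \<open>0 < R\<close> assms(8-12)] sub by blast
  qed
qed

end

section \<open>Convex C2 curves\<close>

lemma convex_C2_curve_continuous_curvature:
  assumes "convex_C2_curve g g1 g2 a b"
  shows "continuous_on {a..b} (curvature g1 g2)"
proof -
  from assms have "\<And>t. t \<in> {a..b} \<Longrightarrow> (g1 has_vector_derivative g2 t) (at t within {a..b})"
    and "continuous_on {a..b} g2" and "\<And>t. t \<in> {a..b} \<Longrightarrow> g1 t \<noteq> 0"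
    unfolding convex_C2_curve_def by auto
  moreover from this(1) have "continuous_on {a..b} g1" by (rule continuous_on_vector_derivative)
  ultimately show ?thesis unfolding curvature_def by (intro continuous_intros) auto
qed

lemma convex_C2_curve_turning_curve:
  assumes "convex_C2_curve g g1 g2 a b"
  obtains ph where "turning_curve g ph (\<lambda>t. cmod (g1 t)) (curvature g1 g2) a b"
    "ph b - ph a = total_curvature g1 g2 a b"
proof -
  from assms have ab: "a < b"
    and g_deriv: "\<And>t. t \<in> {a..b} \<Longrightarrow> (g has_vector_derivative g1 t) (at t within {a..b})"
    and g1_deriv: "\<And>t. t \<in> {a..b} \<Longrightarrow> (g1 has_vector_derivative g2 t) (at t within {a..b})"
    and "continuous_on {a..b} g2" and nz: "\<And>t. t \<in> {a..b} \<Longrightarrow> g1 t \<noteq> 0"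
    and k_pos: "\<And>t. t \<in> {a..b} \<Longrightarrow> 0 < curvature g1 g2 t"
    unfolding convex_C2_curve_def by auto
  obtain ph where polar: "\<And>t. t \<in> {a..b} \<Longrightarrow> g1 t = cmod (g1 t) * cis (ph t)"
    and ph_deriv: "\<And>t. t \<in> {a..b} \<Longrightarrow> (ph has_real_derivative Im (g2 t / g1 t)) (at t within {a..b})"
    using nonvanishing_polar_form[OF g1_deriv \<open>continuous_on {a..b} g2\<close> nz less_imp_le[OF ab]] by blast
  have Im_eq: "Im (g2 t / g1 t) = curvature g1 g2 t * cmod (g1 t)" if "t \<in> {a..b}" for t
    using nz[OF that] by (simp add: Im_divide' curvature_def power2_eq_square power3_eq_cube field_simps)
  have "turning_curve g ph (\<lambda>t. cmod (g1 t)) (curvature g1 g2) a b"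
  proof
    fix t assume t: "t \<in> {a..b}"
    show "(g has_vector_derivative cmod (g1 t) * cis (ph t)) (at t within {a..b})"
      using g_deriv[OF t] polar[OF t] by simp
    show "(ph has_real_derivative curvature g1 g2 t * cmod (g1 t)) (at t within {a..b})"
      using ph_deriv[OF t] Im_eq[OF t] by simp
    show "0 < cmod (g1 t)" "0 < curvature g1 g2 t" using nz[OF t] k_pos[OF t] by auto
  qed
  moreover have "ph b - ph a = total_curvature g1 g2 a b"
  proof -
    have "((\<lambda>t. curvature g1 g2 t * cmod (g1 t)) has_integral ph b - ph a) {a..b}"
      using fundamental_theorem_of_calculus[of a b ph "\<lambda>t. curvature g1 g2 t * cmod (g1 t)"]
        ph_deriv Im_eq ab by (simp add: has_real_derivative_iff_has_vector_derivative[symmetric])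
    then show ?thesis unfolding total_curvature_def by (simp add: integral_unique)
  qed
  ultimately show ?thesis by (rule that)
qed

lemma three_distinct_points_sorted:
  fixes f :: "real \<Rightarrow> 'a"
  assumes "\<exists>p q r. p \<in> f ` A \<inter> S \<and> q \<in> f ` A \<inter> S \<and> r \<in> f ` A \<inter> S \<and> p \<noteq> q \<and> p \<noteq> r \<and> q \<noteq> r"
  obtains t1 t2 t3 where "t1 < t2" "t2 < t3" "t1 \<in> A" "t2 \<in> A" "t3 \<in> A"
    "f t1 \<in> S" "f t2 \<in> S" "f t3 \<in> S" "f t1 \<noteq> f t2" "f t2 \<noteq> f t3"
proof -
  obtain x y z where "x \<in> A" "y \<in> A" "z \<in> A" "f x \<in> S" "f y \<in> S" "f z \<in> S"
    "f x \<noteq> f y" "f x \<noteq> f z" "f y \<noteq> f z"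
    using assms by blast
  then show ?thesis
    using that by (cases x y rule: linorder_cases; cases y z rule: linorder_cases;
      cases x z rule: linorder_cases) auto
qed

theorem theorem4p8:
  fixes g g1 g2 :: "real \<Rightarrow> complex" and a b R :: real and c :: complex
  assumes "convex_C2_curve g g1 g2 a b"
    and "total_curvature g1 g2 a b \<le> pi"
    and "R > 0"
    and "\<exists>p q r. p \<in> g ` {a..b} \<inter> sphere c R \<and> q \<in> g ` {a..b} \<inter> sphere c R \<and>
                 r \<in> g ` {a..b} \<inter> sphere c R \<and> p \<noteq> q \<and> p \<noteq> r \<and> q \<noteq> r"
  shows "\<exists>t\<in>{a..b}. curvature g1 g2 t = 1 / R"
proof -
  obtain ph where curve: "turning_curve g ph (\<lambda>t. cmod (g1 t)) (curvature g1 g2) a b"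
    and turn: "ph b - ph a = total_curvature g1 g2 a b"
    by (rule convex_C2_curve_turning_curve[OF assms(1)])
  interpret turning_curve g ph "\<lambda>t. cmod (g1 t)" "curvature g1 g2" a b by (rule curve)
  obtain t1 t2 t3 where "t1 < t2" "t2 < t3" "t1 \<in> {a..b}" "t2 \<in> {a..b}" "t3 \<in> {a..b}"
    "g t1 \<in> sphere c R" "g t2 \<in> sphere c R" "g t3 \<in> sphere c R" "g t1 \<noteq> g t2" "g t2 \<noteq> g t3"
    by (rule three_distinct_points_sorted[OF assms(4)])
  then show ?thesis
    using curvature_eq_inverse_radius_if_concyclic[OF convex_C2_curve_continuous_curvature[OF assms(1)]]
      turn assms(2,3) by simp
qed

end
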